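(* Let $G=(V,E)$ be a locally finite connected simple undirected graph with a distinguished root vertex $e\in V$, and let $k\ge 1$ be an integer such that $\sigma:=|V_e^{[k]}|\ge 1$, where $V_e^{[k]}=\{x\in V:\partial_G(x,e)=k\}$ is the set of neighbours of $e$ in the distance $k$-graph $G^{[k]}$. For $N\ge 1$ let $G^{\star N}$ be the $N$-fold star power of $G$ (rooted at $e$), let $G^{[\star N,k]}$ be the distance $k$-graph of $G^{\star N}$, and let $A^{[\star N,k]}$ be its adjacency matrix. Then, as $N\to\infty$, the distribution of $(N\sigma)^{-1/2}A^{[\star N,k]}$ with respect to the vacuum state at $e$ converges weakly to the centered Bernoulli distribution $\frac12\delta_{-1}+\frac12\delta_{1}$.
   Context: All graphs are simple (no loops) and undirected; $\partial_H(x,y)$ denotes the graph distance in a graph $H$. For a graph $H=(W,F)$ and $k\ge1$, the distance $k$-graph $H^{[k]}$ is the graph on $W$ whose edges are the pairs $(x,y)$ with $\partial_H(x,y)=k$. For rooted graphs $(G_1,o_1)$, $(G_2,o_2)$ the star product $G_1\star G_2$ has vertex set $V_1\times V_2$, with $(v_1,w_1)\sim(v_2,w_2)$ iff either $v_1=v_2=o_1$ and $w_1\sim w_2$ in $G_2$, or $v_1\sim v_2$ in $G_1$ and $w_1=w_2=o_2$; it is rooted at $(o_1,o_2)$. Equivalently, (the connected component of the root of) the $N$-fold star power $G^{\star N}=G\star\cdots\star G$ is the graph obtained by taking $N$ disjoint copies of $G$ and identifying their roots into a single vertex, again denoted $e$. The distribution of a (symmetric) adjacency matrix $A$ with respect to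 the vacuum state at the vertex $e$ is the probability measure $\mu$ on $\mathbb{R}$ with $\int x^m\,\mu(dx)=(A^m)_{ee}$ for all $m\ge0$, i.e. the $m$-th moment is the number of walks of length $m$ starting and ending at $e$. *)

theory Defs
  imports "HOL-Probability.Probability"
begin

definition is_walk :: "'v set \<Rightarrow> ('v \<Rightarrow> 'v \<Rightarrow> bool) \<Rightarrow> 'v list \<Rightarrow> bool" where
  "is_walk V E xs \<longleftrightarrow> xs \<noteq> [] \<and> set xs \<subseteq> V \<and>
     (\<forall>i. Suc i < length xs \<longrightarrow> E (xs ! i) (xs ! Suc i))"

text \<open>Graph distance (number of edges of a shortest walk); meaningful for connected graphs.\<close>
definition gdist :: "'v set \<Rightarrow> ('v \<Rightarrow> 'v \<Rightarrow> bool) \<Rightarrow> 'v \<Rightarrow> 'v \<Rightarrow> nat" where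
  "gdist V E x y = (LEAST n. \<exists>xs. is_walk V E xs \<and> hd xs = x \<and> last xs = y \<and> length xs = Suc n)"

definition dist_kgraph :: "'v set \<Rightarrow> ('v \<Rightarrow> 'v \<Rightarrow> bool) \<Rightarrow> nat \<Rightarrow> 'v \<Rightarrow> 'v \<Rightarrow> bool" where
  "dist_kgraph V E k x y \<longleftrightarrow> x \<in> V \<and> y \<in> V \<and> gdist V E x y = k"

text \<open>(A^m)_{xx}: number of closed walks of length m at x.\<close>
definition closed_walks :: "'v set \<Rightarrow> ('v \<Rightarrow> 'v \<Rightarrow> bool) \<Rightarrow> 'v \<Rightarrow> nat \<Rightarrow> nat" where
  "closed_walks V E x m = card {xs. is_walk V E xs \<and> length xs = Suc m \<and> hd xs = x \<and> last xs = x}"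

text \<open>N-fold star power of the graph (UNIV, E) rooted at e: N copies of the graph,
vertex v of copy i is (i, v), and all roots (i, e) are identified with (0, e).\<close>
definition star_emb :: "'a \<Rightarrow> nat \<Rightarrow> 'a \<Rightarrow> nat \<times> 'a" where
  "star_emb e i v = (if v = e then (0, e) else (i, v))"

definition star_vertices :: "nat \<Rightarrow> 'a \<Rightarrow> (nat \<times> 'a) set" where
  "star_vertices N e = {star_emb e i v | i v. i < N}"

definition star_adj :: "nat \<Rightarrow> ('a \<Rightarrow> 'a \<Rightarrow> bool) \<Rightarrow> 'a \<Rightarrow> nat \<times> 'a \<Rightarrow> nat \<times> 'a \<Rightarrow> bool" where
  "star_adj N E e x y \<longleftrightarrow> (\<exists>i v w. i < N \<and> E v w \<and> x = star_emb e i v \<and> y = star_emb e i w)"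

definition centered_bernoulli :: "real measure" where
  "centered_bernoulli = distr (measure_pmf (pmf_of_set {-1, 1})) borel (\<lambda>x. x)"

end

theory Submission
  imports Defs
begin

text \<open>
  The m-th vacuum moment counts closed walks of length m at the root of the distance-k graph of
  the star power. The root has N\<sigma> neighbours there, so there are N\<sigma> closed 2-walks. A closed
  4-walk either revisits the root halfway, giving at most (N\<sigma>)^2 walks, or never does;
  since a shortest path between two copies runs through the root, it then stays in one copy
  inside the ball of radius 2k, giving O(N) walks. Hence the normalised variable X has mean 0,
  E X^2 = 1 and E X^4 = 1 + O(1/N), so E |X^2 - 1| \<rightarrow> 0. Markov's inequality
  then puts almost all mass near \<plusminus>1, and E sgn X \<approx> E X = 0 splits it evenly.
\<close>

section \<open>Walks and graph distance\<close>

lemma not_is_walk_Nil [simp]: "\<not> is_walk V E []"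
  by (simp add: is_walk_def)

lemma is_walk_singleton [simp]: "is_walk V E [x] \<longleftrightarrow> x \<in> V"
  by (simp add: is_walk_def)

lemma is_walk_Cons_Cons [simp]:
  "is_walk V E (x # y # zs) \<longleftrightarrow> x \<in> V \<and> E x y \<and> is_walk V E (y # zs)"
  by (simp add: is_walk_def All_less_Suc2 conj_ac)

lemma is_walk_Cons_in: "is_walk V E (x # xs) \<Longrightarrow> x \<in> V"
  by (simp add: is_walk_def)

lemma is_walk_append_tl:
  "is_walk V E xs \<Longrightarrow> is_walk V E ys \<Longrightarrow> last xs = hd ys \<Longrightarrow> is_walk V E (xs @ tl ys)"
proof (induction xs rule: induct_list012)
  case (2 x)
  then show ?case by (cases ys) auto
qed auto

lemma is_walk_rev:
  assumes "\<And>x y. E x y \<Longrightarrow> E y x"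
  shows "is_walk V E xs \<Longrightarrow> is_walk V E (rev xs)"
proof (induction xs rule: induct_list012)
  case (3 x y zs)
  have "is_walk V E (rev (y # zs) @ tl [y, x])"
    using 3 assms by (intro is_walk_append_tl) (auto dest: is_walk_Cons_in)
  then show ?case by simp
qed (auto simp: is_walk_def)

lemma is_walk_take: "is_walk V E xs \<Longrightarrow> 0 < j \<Longrightarrow> is_walk V E (take j xs)"
  by (auto simp: is_walk_def dest: in_set_takeD)

lemma is_walk_drop: "is_walk V E xs \<Longrightarrow> j < length xs \<Longrightarrow> is_walk V E (drop j xs)"
  by (auto simp: is_walk_def add.commute dest: in_set_dropD)

lemma is_walk_map:
  assumes "is_walk V E xs" "f ` V \<subseteq> W" "\<And>x y. x \<in> V \<Longrightarrow> y \<in> V \<Longrightarrow> E x y \<Longrightarrow> F (f x) (f y)"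
  shows "is_walk W F (map f xs)"
  using assms by (auto simp: is_walk_def subset_iff)

definition reachable :: "'v set \<Rightarrow> ('v \<Rightarrow> 'v \<Rightarrow> bool) \<Rightarrow> 'v \<Rightarrow> 'v \<Rightarrow> bool" where
  "reachable V E x y \<longleftrightarrow> (\<exists>xs. is_walk V E xs \<and> hd xs = x \<and> last xs = y)"

lemma reachable_refl: "x \<in> V \<Longrightarrow> reachable V E x x"
  unfolding reachable_def by (intro exI[of _ "[x]"]) simp

lemma reachable_sym:
  "(\<And>x y. E x y \<Longrightarrow> E y x) \<Longrightarrow> reachable V E x y \<Longrightarrow> reachable V E y x"
  unfolding reachable_def by (metis is_walk_rev hd_rev last_rev)

lemma reachable_trans:
  assumes "reachable V E x y" "reachable V E y z"
  shows "reachable V E x z"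
proof -
  obtain xs ys where xs: "is_walk V E xs" "hd xs = x" "last xs = y"
    and ys: "is_walk V E ys" "hd ys = y" "last ys = z"
    using assms unfolding reachable_def by blast
  have "is_walk V E (xs @ tl ys)"
    using xs ys by (intro is_walk_append_tl) simp_all
  with xs ys show ?thesis
    unfolding reachable_def
    by (intro exI[of _ "xs @ tl ys"]) (cases xs; cases ys; auto)
qed

lemma reachable_in: "reachable V E x y \<Longrightarrow> x \<in> V"
  unfolding reachable_def is_walk_def by (auto intro: hd_in_set)

lemma rtranclp_imp_reachable: "E\<^sup>*\<^sup>* x y \<Longrightarrow> reachable UNIV E x y"
proof (induction rule: converse_rtranclp_induct)
  case (step a b)
  then obtain xs where "is_walk UNIV E xs" "hd xs = b" "last xs = y"
    unfolding reachable_def by blast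
  then show ?case
    unfolding reachable_def using step(1)
    by (intro exI[of _ "a # xs"]) (cases xs; auto)
qed (simp add: reachable_refl)

lemma gdist_le_walk:
  assumes "is_walk V E xs" "hd xs = x" "last xs = y"
  shows "gdist V E x y \<le> length xs - 1"
proof -
  have "length xs = Suc (length xs - 1)"
    using assms(1) by (cases xs) auto
  then show ?thesis
    unfolding gdist_def using assms by (intro Least_le) blast
qed

lemma shortest_walk:
  assumes "reachable V E x y"
  obtains xs where "is_walk V E xs" "hd xs = x" "last xs = y" "length xs = Suc (gdist V E x y)"
proof -
  obtain xs where xs: "is_walk V E xs" "hd xs = x" "last xs = y"
    using assms unfolding reachable_def by blast
  then have "length xs = Suc (length xs - 1)"
    by (cases xs) auto
  with xs have "\<exists>n xs. is_walk V E xs \<and> hd xs = x \<and> last xs = y \<and> length xs = Suc n"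
    by blast
  from LeastI_ex[OF this] show ?thesis
    using that unfolding gdist_def by blast
qed

lemma gdist_sym:
  assumes "\<And>x y. E x y \<Longrightarrow> E y x"
  shows "gdist V E x y = gdist V E y x"
proof -
  have reverse: "\<exists>xs. is_walk V E xs \<and> hd xs = b \<and> last xs = a \<and> length xs = n"
    if "is_walk V E xs" "hd xs = a" "last xs = b" "length xs = n" for a b n xs
    using that is_walk_rev[OF assms]
    by (intro exI[of _ "rev xs"]) (auto simp: hd_rev last_rev)
  have "(\<lambda>n. \<exists>xs. is_walk V E xs \<and> hd xs = x \<and> last xs = y \<and> length xs = Suc n) =
        (\<lambda>n. \<exists>xs. is_walk V E xs \<and> hd xs = y \<and> last xs = x \<and> length xs = Suc n)"
    by (blast intro: reverse)
  then show ?thesis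
    unfolding gdist_def by simp
qed

lemma gdist_triangle:
  assumes "reachable V E x y" "reachable V E y z"
  shows "gdist V E x z \<le> gdist V E x y + gdist V E y z"
proof -
  obtain xs where xs: "is_walk V E xs" "hd xs = x" "last xs = y" "length xs = Suc (gdist V E x y)"
    using shortest_walk[OF assms(1)] .
  obtain ys where ys: "is_walk V E ys" "hd ys = y" "last ys = z" "length ys = Suc (gdist V E y z)"
    using shortest_walk[OF assms(2)] .
  have "is_walk V E (xs @ tl ys)"
    using xs ys by (intro is_walk_append_tl) simp_all
  moreover have "hd (xs @ tl ys) = x" "last (xs @ tl ys) = z"
    using xs ys by (cases xs; cases ys; auto)+
  ultimately have "gdist V E x z \<le> length (xs @ tl ys) - 1"
    by (rule gdist_le_walk)
  with xs ys show ?thesis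
    by simp
qed

lemma gdist_eq_0_iff:
  assumes "reachable V E x y"
  shows "gdist V E x y = 0 \<longleftrightarrow> x = y"
proof
  assume "gdist V E x y = 0"
  then obtain xs where "is_walk V E xs" "hd xs = x" "last xs = y" "length xs = 1"
    using shortest_walk[OF assms] by auto
  then show "x = y"
    by (cases xs) auto
next
  assume "x = y"
  then show "gdist V E x y = 0"
    using gdist_le_walk[of V E "[x]" x x] reachable_in[OF assms] by simp
qed

lemma gdist_self [simp]: "x \<in> V \<Longrightarrow> gdist V E x x = 0"
  by (simp add: gdist_eq_0_iff reachable_refl)

lemma gdist_Suc_predecessor:
  assumes "reachable V E x y" "gdist V E x y = Suc n"
  obtains u where "reachable V E x u" "gdist V E x u \<le> n" "E u y"
proof -
  obtain p where p: "is_walk V E p" "hd p = x" "last p = y" "length p = Suc (Suc n)"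
    using shortest_walk[OF assms(1)] assms(2) by metis
  have prefix: "is_walk V E (take (Suc n) p)" "hd (take (Suc n) p) = x" "last (take (Suc n) p) = p ! n"
    using p by (simp_all add: is_walk_take) (simp add: take_Suc_conv_app_nth)
  show thesis
  proof
    show "reachable V E x (p ! n)"
      using prefix unfolding reachable_def by blast
    show "gdist V E x (p ! n) \<le> n"
      using gdist_le_walk[OF prefix] p(4) by simp
    show "E (p ! n) y"
      using p unfolding is_walk_def by (auto simp: last_conv_nth)
  qed
qed

lemma finite_gdist_ball:
  assumes "\<And>u. finite {v. E u v}" and "\<And>y. reachable UNIV E x y"
  shows "finite {y. gdist UNIV E x y \<le> n}"
proof (induction n)
  case 0
  have "{y. gdist UNIV E x y \<le> 0} \<subseteq> {x}"
    using gdist_eq_0_iff[OF assms(2)] by auto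
  then show ?case
    by (rule finite_subset) simp
next
  case (Suc n)
  let ?B = "{y. gdist UNIV E x y \<le> n}"
  have "y \<in> ?B \<union> (\<Union>u\<in>?B. {v. E u v})" if "gdist UNIV E x y \<le> Suc n" for y
  proof (cases "gdist UNIV E x y = Suc n")
    case True
    then obtain u where "gdist UNIV E x u \<le> n" "E u y"
      using gdist_Suc_predecessor[OF assms(2)] by metis
    then show ?thesis
      by blast
  qed (use that in simp)
  then have "{y. gdist UNIV E x y \<le> Suc n} \<subseteq> ?B \<union> (\<Union>u\<in>?B. {v. E u v})"
    by blast
  moreover have "finite (?B \<union> (\<Union>u\<in>?B. {v. E u v}))"
    using Suc assms(1) by blast
  ultimately show ?case
    by (rule finite_subset)
qed

lemma closed_walks_1:
  assumes "\<not> E x x"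
  shows "closed_walks V E x 1 = 0"
proof -
  have "{xs. is_walk V E xs \<and> length xs = Suc 1 \<and> hd xs = x \<and> last xs = x} = {}"
    using assms by (auto simp: length_Suc_conv)
  then show ?thesis
    unfolding closed_walks_def by (simp only: card.empty)
qed

lemma closed_walks_2:
  assumes "x \<in> V"
  shows "closed_walks V E x 2 = card {a \<in> V. E x a \<and> E a x}"
proof -
  have "{xs. is_walk V E xs \<and> length xs = Suc 2 \<and> hd xs = x \<and> last xs = x}
      = (\<lambda>a. [x, a, x]) ` {a \<in> V. E x a \<and> E a x}"
    using assms by (auto simp: length_Suc_conv numeral_eq_Suc)
  moreover have "inj (\<lambda>a. [x, a, x])"
    by (auto intro: injI)
  ultimately show ?thesis
    unfolding closed_walks_def by (simp add: card_image inj_on_subset)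
qed

lemma closed_walks_4:
  assumes "x \<in> V"
  shows "closed_walks V E x 4 =
    card {(a, b, c). a \<in> V \<and> b \<in> V \<and> c \<in> V \<and> E x a \<and> E a b \<and> E b c \<and> E c x}"
proof -
  have "{xs. is_walk V E xs \<and> length xs = Suc 4 \<and> hd xs = x \<and> last xs = x}
      = (\<lambda>(a, b, c). [x, a, b, c, x]) `
          {(a, b, c). a \<in> V \<and> b \<in> V \<and> c \<in> V \<and> E x a \<and> E a b \<and> E b c \<and> E c x}"
    using assms by (auto simp: length_Suc_conv numeral_eq_Suc intro!: image_eqI[where x = "(a, b, c)" for a b c])
  moreover have "inj (\<lambda>(a :: 'a, b :: 'a, c :: 'a). [x, a, b, c, x])"
    by (auto intro: injI)
  ultimately show ?thesis
    unfolding closed_walks_def by (simp add: card_image inj_on_subset)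
qed

section \<open>Star powers and their distance-k graphs\<close>

lemma finite_triples:
  fixes N :: nat
  assumes "finite R" "finite B"
  shows "finite (R \<times> {r} \<times> R \<union> (\<Union>i<N. Pair i ` B \<times> Pair i ` B \<times> Pair i ` B))"
  using assms by auto

lemma card_triples_le:
  fixes N :: nat
  assumes "finite R" "finite B"
  shows "card (R \<times> {r} \<times> R \<union> (\<Union>i<N. Pair i ` B \<times> Pair i ` B \<times> Pair i ` B))
    \<le> card R ^ 2 + N * card B ^ 3"
proof -
  have "card (R \<times> {r} \<times> R \<union> (\<Union>i<N. Pair i ` B \<times> Pair i ` B \<times> Pair i ` B))
      \<le> card (R \<times> {r} \<times> R) + card (\<Union>i<N. Pair i ` B \<times> Pair i ` B \<times> Pair i ` B)"
    by (rule card_Un_le)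
  also have "\<dots> \<le> card R ^ 2 + (\<Sum>i<N. card (Pair i ` B \<times> Pair i ` B \<times> Pair i ` B))"
    by (intro add_mono card_UN_le) (simp_all add: card_cartesian_product power2_eq_square)
  also have "\<dots> = card R ^ 2 + N * card B ^ 3"
    by (simp add: card_cartesian_product card_image inj_on_def power3_eq_cube)
  finally show ?thesis .
qed

locale star_power =
  fixes E :: "'a \<Rightarrow> 'a \<Rightarrow> bool" and e :: 'a and N :: nat
  assumes sym: "\<And>x y. E x y \<Longrightarrow> E y x"
    and locally_finite: "\<And>x. finite {y. E x y}"
    and connected: "\<And>x y. E\<^sup>*\<^sup>* x y"
    and copies_nonempty: "1 \<le> N"
begin

abbreviation "star_V \<equiv> star_vertices N e"
abbreviation "star_E \<equiv> star_adj N E e"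
abbreviation "star_root \<equiv> (0 :: nat, e)"

lemma reachable_base: "reachable UNIV E x y"
  using connected by (rule rtranclp_imp_reachable)

lemma star_emb_in: "i < N \<Longrightarrow> star_emb e i v \<in> star_V"
  unfolding star_vertices_def by blast

lemma root_in: "star_root \<in> star_V"
  using star_emb_in[of 0 e] copies_nonempty by (simp add: star_emb_def)

lemma star_vertices_iff: "x \<in> star_V \<longleftrightarrow> x = star_root \<or> fst x < N \<and> snd x \<noteq> e"
proof
  assume "x \<in> star_V"
  then obtain i v where "i < N" "x = star_emb e i v"
    unfolding star_vertices_def by blast
  then show "x = star_root \<or> fst x < N \<and> snd x \<noteq> e"
    by (simp add: star_emb_def)
next
  assume "x = star_root \<or> fst x < N \<and> snd x \<noteq> e"
  then show "x \<in> star_V"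
    using root_in star_emb_in[of "fst x" "snd x"] by (auto simp: star_emb_def)
qed

lemma star_adj_sym: "star_E x y \<Longrightarrow> star_E y x"
  unfolding star_adj_def using sym by blast

lemma star_adj_snd: "star_E x y \<Longrightarrow> E (snd x) (snd y)"
  unfolding star_adj_def by (auto simp: star_emb_def)

lemma star_adj_same_copy: "star_E x y \<Longrightarrow> x \<noteq> star_root \<Longrightarrow> y \<noteq> star_root \<Longrightarrow> fst x = fst y"
  unfolding star_adj_def by (auto simp: star_emb_def split: if_splits)

lemma is_walk_star_emb:
  assumes "is_walk UNIV E xs" "i < N"
  shows "is_walk star_V star_E (map (star_emb e i) xs)"
proof (rule is_walk_map[OF assms(1)])
  show "star_emb e i ` UNIV \<subseteq> star_V"
    using star_emb_in[OF assms(2)] by blast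
  show "star_E (star_emb e i v) (star_emb e i w)" if "E v w" for v w
    unfolding star_adj_def using that assms(2) by blast
qed

lemma is_walk_snd: "is_walk star_V star_E xs \<Longrightarrow> is_walk UNIV E (map snd xs)"
  by (erule is_walk_map) (auto simp: star_adj_snd)

lemma reachable_root_star_emb:
  assumes "i < N"
  shows "reachable star_V star_E star_root (star_emb e i v)"
proof -
  obtain xs where xs: "is_walk UNIV E xs" "hd xs = e" "last xs = v"
    using reachable_base unfolding reachable_def by blast
  moreover have "xs \<noteq> []"
    using xs(1) by auto
  moreover have "is_walk star_V star_E (map (star_emb e i) xs)"
    using xs(1) assms by (rule is_walk_star_emb)
  ultimately show ?thesis
    unfolding reachable_def
    by (intro exI[of _ "map (star_emb e i) xs"]) (simp add: hd_map last_map star_emb_def)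
qed

lemma star_reachable:
  assumes "x \<in> star_V" "y \<in> star_V"
  shows "reachable star_V star_E x y"
proof -
  have from_root: "reachable star_V star_E star_root z" if "z \<in> star_V" for z
    using that reachable_root_star_emb unfolding star_vertices_def by blast
  have "reachable star_V star_E x star_root"
    using star_adj_sym from_root[OF assms(1)] by (rule reachable_sym)
  then show ?thesis
    using from_root[OF assms(2)] by (rule reachable_trans)
qed

lemma gdist_root_star_emb:
  assumes "i < N"
  shows "gdist star_V star_E star_root (star_emb e i v) = gdist UNIV E e v"
proof (rule antisym)
  obtain xs where xs: "is_walk UNIV E xs" "hd xs = e" "last xs = v"
    "length xs = Suc (gdist UNIV E e v)"
    using shortest_walk[OF reachable_base] .
  moreover have "xs \<noteq> []"
    using xs(1) by auto
  ultimately show "gdist star_V star_E star_root (star_emb e i v) \<le> gdist UNIV E e v"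
    using gdist_le_walk[OF is_walk_star_emb[OF xs(1) assms]]
    by (simp add: hd_map last_map star_emb_def)
next
  obtain xs where xs: "is_walk star_V star_E xs" "hd xs = star_root" "last xs = star_emb e i v"
    "length xs = Suc (gdist star_V star_E star_root (star_emb e i v))"
    using shortest_walk[OF reachable_root_star_emb[OF assms]] .
  moreover have "xs \<noteq> []"
    using xs(1) by auto
  ultimately show "gdist UNIV E e v \<le> gdist star_V star_E star_root (star_emb e i v)"
    using gdist_le_walk[OF is_walk_snd[OF xs(1)]]
    by (simp add: hd_map last_map star_emb_def)
qed

lemma walk_avoiding_root_stays_in_copy:
  "is_walk star_V star_E xs \<Longrightarrow> star_root \<notin> set xs \<Longrightarrow> fst (last xs) = fst (hd xs)"
proof (induction xs rule: induct_list012)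
  case (3 x y zs)
  then have "fst x = fst y"
    by (intro star_adj_same_copy) auto
  with 3 show ?case
    by simp
qed auto

lemma gdist_through_root:
  assumes "x \<in> star_V" "y \<in> star_V" "x \<noteq> star_root" "y \<noteq> star_root" "fst x \<noteq> fst y"
  shows "gdist star_V star_E x star_root + gdist star_V star_E star_root y \<le> gdist star_V star_E x y"
proof -
  obtain p where p: "is_walk star_V star_E p" "hd p = x" "last p = y" "length p = Suc (gdist star_V star_E x y)"
    using shortest_walk[OF star_reachable[OF assms(1,2)]] .
  then have "star_root \<in> set p"
    using walk_avoiding_root_stays_in_copy[OF p(1)] p(2,3) assms(5) by auto
  then obtain t where t: "t < length p" "p ! t = star_root"
    by (auto simp: in_set_conv_nth)
  have "gdist star_V star_E x star_root \<le> length (take (Suc t) p) - 1"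
  proof (rule gdist_le_walk)
    show "is_walk star_V star_E (take (Suc t) p)"
      using p(1) by (rule is_walk_take) simp
    show "hd (take (Suc t) p) = x"
      using p(2) by simp
    show "last (take (Suc t) p) = star_root"
      using t by (simp add: take_Suc_conv_app_nth)
  qed
  moreover have "gdist star_V star_E star_root y \<le> length (drop t p) - 1"
    using p t by (intro gdist_le_walk is_walk_drop) (auto simp: hd_drop_conv_nth)
  ultimately show ?thesis
    using p t by simp
qed

lemma gdist_star_sym: "gdist star_V star_E x y = gdist star_V star_E y x"
  using star_adj_sym by (rule gdist_sym)

lemma gdist_star_root_pos:
  assumes "x \<in> star_V" "x \<noteq> star_root"
  shows "0 < gdist star_V star_E star_root x"
  using gdist_eq_0_iff[OF star_reachable[OF root_in assms(1)]] assms(2) by simp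

lemma gdist_base_sym: "gdist UNIV E x y = gdist UNIV E y x"
  using sym by (rule gdist_sym)

context
  fixes k :: nat
  assumes k: "1 \<le> k"
begin

abbreviation "star_dist \<equiv> dist_kgraph star_V star_E k"

lemma dist_kgraph_sym: "star_dist x y \<longleftrightarrow> star_dist y x"
  unfolding dist_kgraph_def using gdist_star_sym[of x y] by auto

lemma dist_kgraph_root_iff: "star_dist star_root a \<longleftrightarrow> a \<in> {..<N} \<times> {v. gdist UNIV E v e = k}"
proof
  assume a: "star_dist star_root a"
  then have "a \<in> star_V" "a \<noteq> star_root"
    using k root_in by (auto simp: dist_kgraph_def)
  then obtain i v where iv: "a = (i, v)" "i < N" "v \<noteq> e"
    by (cases a) (auto simp: star_vertices_iff)
  then have "gdist UNIV E e v = k"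
    using a gdist_root_star_emb[of i v] by (simp add: dist_kgraph_def star_emb_def)
  then show "a \<in> {..<N} \<times> {v. gdist UNIV E v e = k}"
    using iv gdist_base_sym[of e v] by simp
next
  assume "a \<in> {..<N} \<times> {v. gdist UNIV E v e = k}"
  then obtain i v where a: "a = (i, v)" "i < N" "gdist UNIV E e v = k"
    using gdist_base_sym[of e] by auto
  then have "v \<noteq> e"
    using k by auto
  then have "a = star_emb e i v"
    using a by (simp add: star_emb_def)
  then show "star_dist star_root a"
    unfolding dist_kgraph_def using a root_in star_emb_in gdist_root_star_emb by simp
qed

lemma closed_walks_dist_kgraph_1: "closed_walks star_V star_dist star_root 1 = 0"
  using k root_in by (intro closed_walks_1) (simp add: dist_kgraph_def)

lemma closed_walks_dist_kgraph_2: "closed_walks star_V star_dist star_root 2 = N * card {v. gdist UNIV E v e = k}"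
proof -
  have "{a \<in> star_V. star_dist star_root a \<and> star_dist a star_root} = {a. star_dist star_root a}"
    using dist_kgraph_sym[of star_root] by (auto simp: dist_kgraph_def)
  also have "\<dots> = {..<N} \<times> {v. gdist UNIV E v e = k}"
    using dist_kgraph_root_iff by blast
  finally have "{a \<in> star_V. star_dist star_root a \<and> star_dist a star_root} = {..<N} \<times> {v. gdist UNIV E v e = k}" .
  then show ?thesis
    using closed_walks_2[OF root_in] by (simp add: card_cartesian_product)
qed

lemma closed_four_walk_in_one_copy:
  assumes walk: "star_dist star_root a" "star_dist a b" "star_dist b c" "star_dist c star_root" and b: "b \<noteq> star_root"
  shows "\<exists>i<N. {a, b, c} \<subseteq> Pair i ` {v. gdist UNIV E e v \<le> 2 * k}"
proof -
  obtain i u where a: "a = (i, u)" "i < N" "gdist UNIV E e u = k"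
    using walk(1) dist_kgraph_root_iff gdist_base_sym[of e] by auto
  obtain j w where c: "c = (j, w)" "j < N" "gdist UNIV E e w = k"
    using walk(4) dist_kgraph_root_iff dist_kgraph_sym[of c star_root] gdist_base_sym[of e] by auto
  have abc: "a \<in> star_V" "b \<in> star_V" "c \<in> star_V" "a \<noteq> star_root" "c \<noteq> star_root"
    and dist: "gdist star_V star_E star_root a = k" "gdist star_V star_E a b = k" "gdist star_V star_E b c = k"
      "gdist star_V star_E c star_root = k"
    using walk k root_in by (auto simp: dist_kgraph_def)
  have b_pos: "0 < gdist star_V star_E star_root b"
    using abc(2) b by (rule gdist_star_root_pos)
  \<comment> \<open>Leaving the copy of \<open>x\<close> means passing through the root, which costs more than \<open>k\<close>.\<close>
  have same_copy: "fst x = fst b" if "x \<in> star_V" "x \<noteq> star_root"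
    "gdist star_V star_E star_root x = k" "gdist star_V star_E x b = k" for x
  proof (rule ccontr)
    assume "fst x \<noteq> fst b"
    then show False
      using gdist_through_root[OF that(1) abc(2) that(2) b] that(3,4) gdist_star_sym[of x star_root]
        b_pos by simp
  qed
  have "fst b = i"
    using same_copy[of a] abc dist a by simp
  moreover have "snd b \<noteq> e"
    using abc(2) b by (simp add: star_vertices_iff)
  ultimately obtain v where bv: "b = (i, v)" "v \<noteq> e"
    by (cases b) simp
  have "j = i"
    using same_copy[of c] abc dist gdist_star_sym[of b c] gdist_star_sym[of c star_root] a c bv by simp
  have "gdist star_V star_E star_root b \<le> 2 * k"
    using gdist_triangle[OF star_reachable star_reachable, of star_root a b] root_in abc dist by simp
  moreover have "gdist star_V star_E star_root b = gdist UNIV E e v"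
    using gdist_root_star_emb[OF a(2), of v] bv by (simp add: star_emb_def)
  ultimately show ?thesis
    using a c bv \<open>j = i\<close> by auto
qed

lemma closed_walks_dist_kgraph_4:
  "closed_walks star_V star_dist star_root 4 \<le>
     (N * card {v. gdist UNIV E v e = k})\<^sup>2 + N * card {v. gdist UNIV E e v \<le> 2 * k} ^ 3"
proof -
  define R where "R = {..<N} \<times> {v. gdist UNIV E v e = k}"
  define B where "B = {v. gdist UNIV E e v \<le> 2 * k}"
  have finite_B: "finite B"
    unfolding B_def using locally_finite reachable_base by (rule finite_gdist_ball)
  have "{v. gdist UNIV E v e = k} \<subseteq> B"
    unfolding B_def using gdist_base_sym[of _ e] by auto
  then have finite_R: "finite R"
    unfolding R_def using finite_B finite_subset by blast
  have "{(a, b, c). a \<in> star_V \<and> b \<in> star_V \<and> c \<in> star_V \<and>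
      star_dist star_root a \<and> star_dist a b \<and> star_dist b c \<and> star_dist c star_root}
    \<subseteq> R \<times> {star_root} \<times> R \<union> (\<Union>i<N. Pair i ` B \<times> Pair i ` B \<times> Pair i ` B)"
    (is "?T \<subseteq> ?S")
  proof
    fix t
    assume "t \<in> ?T"
    then obtain a b c where t: "t = (a, b, c)"
      and walk: "star_dist star_root a" "star_dist a b" "star_dist b c" "star_dist c star_root"
      by auto
    show "t \<in> ?S"
    proof (cases "b = star_root")
      case True
      then show ?thesis
        using t walk(1,4) dist_kgraph_root_iff dist_kgraph_sym[of c star_root] unfolding R_def by auto
    next
      case False
      then show ?thesis
        using t closed_four_walk_in_one_copy[OF walk] unfolding B_def by blast
    qed
  qed
  then have "card ?T \<le> card ?S"
    using finite_triples[OF finite_R finite_B] by (rule card_mono[rotated])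
  then have "closed_walks star_V star_dist star_root 4 \<le> card R ^ 2 + N * card B ^ 3"
    using closed_walks_4[OF root_in, of star_dist] card_triples_le[OF finite_R finite_B, of star_root N]
    by linarith
  then show ?thesis
    unfolding R_def B_def by (simp add: card_cartesian_product)
qed

end

end

section \<open>Convergence to the centered Bernoulli law\<close>

lemma real_distribution_centered_bernoulli: "real_distribution centered_bernoulli"
  unfolding centered_bernoulli_def real_distribution_def real_distribution_axioms_def
  by (auto intro!: prob_space.prob_space_distr prob_space_measure_pmf)

lemma measure_centered_bernoulli:
  assumes "A \<in> sets borel"
  shows "measure centered_bernoulli A = card ({-1, 1} \<inter> A) / 2"
proof -
  have "measure centered_bernoulli A = measure (measure_pmf (pmf_of_set {-1::real, 1})) A"
    unfolding centered_bernoulli_def using assms by (subst measure_distr) auto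
  also have "\<dots> = card ({-1, 1} \<inter> A) / card {-1::real, 1}"
    by (rule measure_pmf_of_set) auto
  finally show ?thesis
    by simp
qed

lemma cdf_centered_bernoulli:
  "cdf centered_bernoulli x = (if x < -1 then 0 else if x < 1 then 1 / 2 else 1)"
proof -
  have "{-1, 1} \<inter> {..x} = (if x < -1 then {} else if x < 1 then {-1} else {-1, 1 :: real})"
    by auto
  then show ?thesis
    unfolding cdf_def by (simp add: measure_centered_bernoulli)
qed

lemma isCont_cdf_centered_bernoulli:
  "isCont (cdf centered_bernoulli) x \<longleftrightarrow> x \<noteq> -1 \<and> x \<noteq> 1"
proof -
  interpret real_distribution centered_bernoulli
    by (rule real_distribution_centered_bernoulli)
  have "card ({-1, 1} \<inter> {x}) = (0 :: nat) \<longleftrightarrow> x \<noteq> -1 \<and> x \<noteq> 1"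
    by auto
  then show ?thesis
    by (simp add: isCont_cdf measure_centered_bernoulli)
qed

lemma abs_sgn_minus_le: "\<bar>sgn t - t\<bar> \<le> \<bar>t\<^sup>2 - 1\<bar>" for t :: real
proof -
  have "\<bar>t\<^sup>2 - 1\<bar> = \<bar>t - 1\<bar> * \<bar>t + 1\<bar>"
    by (simp add: abs_mult[symmetric] power2_eq_square algebra_simps)
  moreover have "\<bar>sgn t - t\<bar> \<le> \<bar>t - 1\<bar> * \<bar>t + 1\<bar>"
  proof (cases t "0 :: real" rule: linorder_cases)
    case greater
    then show ?thesis
      using mult_left_mono[of 1 "\<bar>t + 1\<bar>" "\<bar>t - 1\<bar>"] by (simp add: abs_minus_commute)
  next
    case less
    then show ?thesis
      using mult_right_mono[of 1 "\<bar>t - 1\<bar>" "\<bar>t + 1\<bar>"] by (simp add: abs_minus_commute add.commute)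
  qed simp
  ultimately show ?thesis
    by simp
qed

context real_distribution
begin

lemma integrable_abs_sq_minus_one:
  "integrable M (\<lambda>x. x\<^sup>2) \<Longrightarrow> integrable M (\<lambda>x. \<bar>x\<^sup>2 - 1\<bar>)"
  by (intro integrable_abs Bochner_Integration.integrable_diff) auto

lemma prob_abs_sq_minus_one_ge:
  assumes "integrable M (\<lambda>x. x\<^sup>2)" "0 < c"
  shows "prob {x. c \<le> \<bar>x\<^sup>2 - 1\<bar>} \<le> (\<integral>x. \<bar>x\<^sup>2 - 1\<bar> \<partial>M) / c"
  using integral_Markov_inequality_measure[OF integrable_abs_sq_minus_one[OF assms(1)], of UNIV c]
    assms(2) by simp

lemma cdf_below_minus_one:
  assumes "integrable M (\<lambda>x. x\<^sup>2)" "x < -1"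
  shows "cdf M x \<le> (\<integral>t. \<bar>t\<^sup>2 - 1\<bar> \<partial>M) / (x\<^sup>2 - 1)"
proof -
  have "1 < x\<^sup>2"
    using one_less_power[of "-x" 2] assms(2) by simp
  have "x\<^sup>2 - 1 \<le> \<bar>t\<^sup>2 - 1\<bar>" if "t \<le> x" for t
    using abs_le_square_iff[of x t] that assms(2) abs_ge_self[of "t\<^sup>2 - 1"] by simp
  then have "{..x} \<subseteq> {t. x\<^sup>2 - 1 \<le> \<bar>t\<^sup>2 - 1\<bar>}"
    by auto
  then have "cdf M x \<le> prob {t. x\<^sup>2 - 1 \<le> \<bar>t\<^sup>2 - 1\<bar>}"
    unfolding cdf_def by (intro finite_measure_mono) auto
  also have "\<dots> \<le> (\<integral>t. \<bar>t\<^sup>2 - 1\<bar> \<partial>M) / (x\<^sup>2 - 1)"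
    using assms(1) \<open>1 < x\<^sup>2\<close> by (intro prob_abs_sq_minus_one_ge) auto
  finally show ?thesis .
qed

lemma cdf_above_one:
  assumes "integrable M (\<lambda>x. x\<^sup>2)" "1 < x"
  shows "1 - cdf M x \<le> (\<integral>t. \<bar>t\<^sup>2 - 1\<bar> \<partial>M) / (x\<^sup>2 - 1)"
proof -
  have "1 < x\<^sup>2"
    using assms(2) abs_le_square_iff[of 1 x] by simp
  have "1 - cdf M x = prob {x<..}"
    using prob_compl[of "{..x}"] unfolding cdf_def by (simp add: Compl_eq_Diff_UNIV[symmetric])
  also have "\<dots> \<le> prob {t. x\<^sup>2 - 1 \<le> \<bar>t\<^sup>2 - 1\<bar>}"
  proof (rule finite_measure_mono)
    show "{x<..} \<subseteq> {t. x\<^sup>2 - 1 \<le> \<bar>t\<^sup>2 - 1\<bar>}"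
      using abs_le_square_iff[of x] assms(2) abs_ge_self[of "_\<^sup>2 - 1"] by force
  qed measurable
  also have "\<dots> \<le> (\<integral>t. \<bar>t\<^sup>2 - 1\<bar> \<partial>M) / (x\<^sup>2 - 1)"
    using assms(1) \<open>1 < x\<^sup>2\<close> by (intro prob_abs_sq_minus_one_ge) auto
  finally show ?thesis .
qed

lemma cdf_between_minus_one_and_one:
  assumes "integrable M (\<lambda>x. x\<^sup>2)" "\<bar>x\<bar> < 1"
  shows "\<bar>cdf M x - prob {..<0}\<bar> \<le> (\<integral>t. \<bar>t\<^sup>2 - 1\<bar> \<partial>M) / (1 - x\<^sup>2)"
proof -
  define U where "U = {t. 1 - x\<^sup>2 \<le> \<bar>t\<^sup>2 - 1\<bar>}"
  have "x\<^sup>2 < 1"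
    using assms(2) by (simp add: abs_square_less_1)
  have "t \<le> x \<longleftrightarrow> t < 0" if "t \<notin> U" for t
  proof -
    have "\<not> \<bar>t\<bar> \<le> \<bar>x\<bar>"
      using that abs_le_square_iff[of t x] \<open>x\<^sup>2 < 1\<close> unfolding U_def by auto
    then show ?thesis
      by linarith
  qed
  then have "{..x} \<subseteq> {..<0} \<union> U" "{..<0} \<subseteq> {..x} \<union> U"
    by auto
  moreover have events: "U \<in> events" "{..x} \<in> events" "{..<0} \<in> events"
    unfolding U_def by measurable
  ultimately have "prob {..x} \<le> prob ({..<0} \<union> U)" "prob {..<0} \<le> prob ({..x} \<union> U)"
    by (auto intro!: finite_measure_mono)
  moreover have "prob ({..<0} \<union> U) \<le> prob {..<0} + prob U" "prob ({..x} \<union> U) \<le> prob {..x} + prob U"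
    using events by (auto intro!: measure_Un_le)
  moreover have "prob U \<le> (\<integral>t. \<bar>t\<^sup>2 - 1\<bar> \<partial>M) / (1 - x\<^sup>2)"
    unfolding U_def using assms(1) \<open>x\<^sup>2 < 1\<close> by (intro prob_abs_sq_minus_one_ge) auto
  ultimately show ?thesis
    unfolding cdf_def by linarith
qed

text \<open>\<open>P(X > 0) - P(X < 0) = E sgn X = E (sgn X - X)\<close>, and \<open>|sgn t - t| \<le> |t^2 - 1|\<close>.\<close>

lemma abs_prob_pos_minus_prob_neg_le:
  assumes "integrable M (\<lambda>x. x\<^sup>2)" "(\<integral>x. x \<partial>M) = 0"
  shows "\<bar>prob {0<..} - prob {..<0}\<bar> \<le> (\<integral>x. \<bar>x\<^sup>2 - 1\<bar> \<partial>M)"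
proof -
  have integrable_indicator: "integrable M (indicator A :: real \<Rightarrow> real)" if "A \<in> events" for A
    using that by (intro integrable_const_bound[where B = 1]) auto
  have integrable_sgn: "integrable M (sgn :: real \<Rightarrow> real)"
    by (intro integrable_const_bound[where B = 1]) auto
  have integrable_id: "integrable M (\<lambda>x. x)"
    using assms(1) by (rule square_integrable_imp_integrable[rotated]) measurable
  have "sgn t = indicator {0<..} t - indicator {..<0} t" for t :: real
    by (simp add: indicator_def sgn_if)
  then have "prob {0<..} - prob {..<0} = (\<integral>x. sgn x \<partial>M)"
    using integrable_indicator by simp
  also have "\<dots> = (\<integral>x. sgn x - x \<partial>M)"
    using integrable_sgn integrable_id assms(2) by simp
  finally have "\<bar>prob {0<..} - prob {..<0}\<bar> \<le> (\<integral>x. \<bar>sgn x - x\<bar> \<partial>M)"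
    using integral_norm_bound[of M "\<lambda>x. sgn x - x"] by simp
  also have "\<dots> \<le> (\<integral>x. \<bar>x\<^sup>2 - 1\<bar> \<partial>M)"
    using integrable_sgn integrable_id integrable_abs_sq_minus_one[OF assms(1)] abs_sgn_minus_le
    by (intro integral_mono) auto
  finally show ?thesis .
qed

lemma prob_negative_near_half:
  assumes "integrable M (\<lambda>x. x\<^sup>2)" "(\<integral>x. x \<partial>M) = 0"
  shows "\<bar>prob {..<0} - 1 / 2\<bar> \<le> (\<integral>x. \<bar>x\<^sup>2 - 1\<bar> \<partial>M)"
proof -
  have events: "{..<0} \<in> events" "{0} \<in> events" "{0<..} \<in> events"
    by simp_all
  have "({..<0} \<union> {0} \<union> {0<..} :: real set) = space M"
    by auto
  then have "prob ({..<0} \<union> {0} \<union> {0<..}) = 1"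
    by (simp only: prob_space)
  moreover have "prob ({..<0} \<union> {0} \<union> {0<..}) = prob ({..<0} \<union> {0}) + prob {0<..}"
    using events by (intro finite_measure_Union) auto
  moreover have "prob ({..<0} \<union> {0}) = prob {..<0} + prob {0}"
    using events by (intro finite_measure_Union) auto
  ultimately have total: "prob {..<0} + prob {0} + prob {0<..} = 1"
    by simp
  have "prob {0} \<le> prob {x. 1 \<le> \<bar>x\<^sup>2 - 1\<bar>}"
    by (rule finite_measure_mono) (simp_all, measurable)
  also have "\<dots> \<le> (\<integral>x. \<bar>x\<^sup>2 - 1\<bar> \<partial>M)"
    using prob_abs_sq_minus_one_ge[OF assms(1), of 1] by simp
  finally show ?thesis
    using total abs_prob_pos_minus_prob_neg_le[OF assms] measure_nonneg[of M "{0}"] by linarith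
qed

lemma cdf_near_centered_bernoulli:
  assumes "integrable M (\<lambda>x. x\<^sup>2)" "(\<integral>x. x \<partial>M) = 0" "x \<noteq> -1" "x \<noteq> 1"
  shows "\<bar>cdf M x - cdf centered_bernoulli x\<bar> \<le> (1 + 1 / \<bar>x\<^sup>2 - 1\<bar>) * (\<integral>t. \<bar>t\<^sup>2 - 1\<bar> \<partial>M)"
proof -
  define \<delta> where "\<delta> = (\<integral>t. \<bar>t\<^sup>2 - 1\<bar> \<partial>M)"
  define c where "c = 1 / \<bar>x\<^sup>2 - 1\<bar>"
  have "0 \<le> \<delta>"
    unfolding \<delta>_def by (rule integral_nonneg_AE) simp
  then have bound: "c * \<delta> \<le> (1 + c) * \<delta>"
    by (simp add: distrib_right)
  consider "x < -1" | "\<bar>x\<bar> < 1" | "1 < x"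
    using assms(3,4) by linarith
  then have "\<bar>cdf M x - cdf centered_bernoulli x\<bar> \<le> (1 + c) * \<delta>"
  proof cases
    case 1
    then have "1 < x\<^sup>2"
      using one_less_power[of "-x" 2] by simp
    then have "\<delta> / (x\<^sup>2 - 1) = c * \<delta>"
      by (simp add: c_def)
    then show ?thesis
      using cdf_below_minus_one[OF assms(1) 1] cdf_nonneg[of x] bound 1
      unfolding \<delta>_def[symmetric] by (simp add: cdf_centered_bernoulli)
  next
    case 2
    then have "x\<^sup>2 < 1"
      by (simp add: abs_square_less_1)
    then have "\<delta> / (1 - x\<^sup>2) = c * \<delta>"
      by (simp add: c_def)
    moreover have "cdf centered_bernoulli x = 1 / 2"
      using 2 by (simp add: cdf_centered_bernoulli abs_less_iff)
    ultimately show ?thesis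
      using cdf_between_minus_one_and_one[OF assms(1) 2] prob_negative_near_half[OF assms(1,2)]
      unfolding \<delta>_def[symmetric] by (simp add: distrib_right)
  next
    case 3
    then have "1 < x\<^sup>2"
      using one_less_power[of x 2] by simp
    then have "\<delta> / (x\<^sup>2 - 1) = c * \<delta>"
      by (simp add: c_def)
    then show ?thesis
      using cdf_above_one[OF assms(1) 3] cdf_bounded_prob[of x] bound 3
      unfolding \<delta>_def[symmetric] by (simp add: cdf_centered_bernoulli)
  qed
  then show ?thesis
    unfolding \<delta>_def c_def .
qed


lemma integral_abs_sq_minus_one_le_sqrt:
  assumes "integrable M (\<lambda>x. x ^ 4)"
  shows "(\<integral>x. \<bar>x\<^sup>2 - 1\<bar> \<partial>M) \<le> sqrt ((\<integral>x. x ^ 4 \<partial>M) - 2 * (\<integral>x. x\<^sup>2 \<partial>M) + 1)"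
proof -
  have square: "(\<lambda>x. (x\<^sup>2)\<^sup>2) = (\<lambda>x::real. x ^ 4)"
    by (simp add: power_even_eq)
  have integrable_sq: "integrable M (\<lambda>x. x\<^sup>2)"
    using assms unfolding square[symmetric] by (rule square_integrable_imp_integrable[rotated]) measurable
  have expand: "(\<lambda>x. \<bar>x\<^sup>2 - 1\<bar>\<^sup>2) = (\<lambda>x::real. x ^ 4 - 2 * x\<^sup>2 + 1)"
    by (simp add: power2_diff power_even_eq algebra_simps)
  have integrable_Y2: "integrable M (\<lambda>x. \<bar>x\<^sup>2 - 1\<bar>\<^sup>2)"
    unfolding expand using assms integrable_sq by auto
  have "(\<integral>x. \<bar>x\<^sup>2 - 1\<bar> \<partial>M)\<^sup>2 \<le> (\<integral>x. \<bar>x\<^sup>2 - 1\<bar>\<^sup>2 \<partial>M)"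
    using variance_eq[OF integrable_abs_sq_minus_one[OF integrable_sq] integrable_Y2]
      variance_positive[of "\<lambda>x. \<bar>x\<^sup>2 - 1\<bar>"] by linarith
  also have "\<dots> = (\<integral>x. x ^ 4 \<partial>M) - 2 * (\<integral>x. x\<^sup>2 \<partial>M) + 1"
    unfolding expand using assms integrable_sq prob_space by simp
  finally show ?thesis
    by (rule real_le_rsqrt)
qed

end

theorem weak_conv_centered_bernoulli:
  fixes M :: "nat \<Rightarrow> real measure"
  assumes "\<forall>\<^sub>F n in sequentially.
      real_distribution (M n) \<and> integrable (M n) (\<lambda>x. x\<^sup>2) \<and> (\<integral>x. x \<partial>M n) = 0"
    and "(\<lambda>n. \<integral>x. \<bar>x\<^sup>2 - 1\<bar> \<partial>M n) \<longlonglongrightarrow> 0"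
  shows "weak_conv_m M centered_bernoulli"
  unfolding weak_conv_m_def weak_conv_def
proof (intro allI impI)
  fix x
  assume "isCont (cdf centered_bernoulli) x"
  then have x: "x \<noteq> -1" "x \<noteq> 1"
    by (simp_all add: isCont_cdf_centered_bernoulli)
  define C where "C = 1 + 1 / \<bar>x\<^sup>2 - 1\<bar>"
  have "\<forall>\<^sub>F n in sequentially.
      norm (cdf (M n) x - cdf centered_bernoulli x) \<le> C * (\<integral>t. \<bar>t\<^sup>2 - 1\<bar> \<partial>M n)"
    using assms(1) by eventually_elim (use real_distribution.cdf_near_centered_bernoulli x in \<open>auto simp: C_def\<close>)
  moreover have "(\<lambda>n. C * (\<integral>t. \<bar>t\<^sup>2 - 1\<bar> \<partial>M n)) \<longlonglongrightarrow> 0"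
    using tendsto_mult_right_zero[OF assms(2)] .
  ultimately have "(\<lambda>n. cdf (M n) x - cdf centered_bernoulli x) \<longlonglongrightarrow> 0"
    by (rule Lim_null_comparison)
  then show "(\<lambda>n. cdf (M n) x) \<longlonglongrightarrow> cdf centered_bernoulli x"
    by (rule LIM_zero_cancel)
qed

lemma (in star_power) normalized_dist_kgraph_moments:
  fixes M :: "real measure" and k :: nat
  defines "\<sigma> \<equiv> card {v. gdist UNIV E v e = k}"
    and "\<beta> \<equiv> card {v. gdist UNIV E e v \<le> 2 * k} ^ 3"
  assumes k: "1 \<le> k" and \<sigma>: "1 \<le> \<sigma>" and M: "real_distribution M"
    and moments: "\<And>m. integrable M (\<lambda>x. x ^ m) \<and>
      (\<integral>x. x ^ m \<partial>M) = (1 / sqrt (real N * real \<sigma>)) ^ m * real (closed_walks star_V (star_dist k) star_root m)"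
  shows "(\<integral>x. x \<partial>M) = 0" and "(\<integral>x. \<bar>x\<^sup>2 - 1\<bar> \<partial>M) \<le> sqrt (real \<beta> / (real \<sigma>)\<^sup>2 / real N)"
proof -
  interpret real_distribution M
    by (rule M)
  define s where "s = real N * real \<sigma>"
  have "0 < s"
    unfolding s_def using copies_nonempty \<sigma> by simp
  then have scale2: "(1 / sqrt s)\<^sup>2 = 1 / s"
    by (simp add: power_divide)
  have scale4: "(1 / sqrt s) ^ 4 = 1 / s\<^sup>2"
    using power_mult[of "1 / sqrt s" 2 2] unfolding scale2 by (simp add: power_divide)
  show "(\<integral>x. x \<partial>M) = 0"
    using moments[of 1] closed_walks_dist_kgraph_1[OF k] by simp
  have "(\<integral>x. x\<^sup>2 \<partial>M) = 1"
    using moments[of 2] closed_walks_dist_kgraph_2[OF k] scale2 copies_nonempty \<sigma>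
    unfolding s_def \<sigma>_def by simp
  moreover have "(\<integral>x. x ^ 4 \<partial>M) \<le> 1 + real \<beta> / (real \<sigma>)\<^sup>2 / real N"
  proof -
    have "real (closed_walks star_V (star_dist k) star_root 4) \<le> s\<^sup>2 + real N * \<beta>"
      using closed_walks_dist_kgraph_4[OF k] unfolding s_def \<sigma>_def \<beta>_def
      by (simp flip: of_nat_mult of_nat_power of_nat_add add: power_mult_distrib)
    then have "(\<integral>x. x ^ 4 \<partial>M) \<le> (s\<^sup>2 + real N * \<beta>) / s\<^sup>2"
      using moments[of 4] scale4 unfolding s_def \<sigma>_def by (simp add: divide_right_mono)
    also have "\<dots> = 1 + real \<beta> / (real \<sigma>)\<^sup>2 / real N"
      using copies_nonempty \<sigma> unfolding s_def by (simp add: field_simps power2_eq_square)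
    finally show ?thesis .
  qed
  ultimately have "sqrt ((\<integral>x. x ^ 4 \<partial>M) - 2 * (\<integral>x. x\<^sup>2 \<partial>M) + 1) \<le> sqrt (real \<beta> / (real \<sigma>)\<^sup>2 / real N)"
    by simp
  moreover have "(\<integral>x. \<bar>x\<^sup>2 - 1\<bar> \<partial>M) \<le> sqrt ((\<integral>x. x ^ 4 \<partial>M) - 2 * (\<integral>x. x\<^sup>2 \<partial>M) + 1)"
    using moments[of 4] by (intro integral_abs_sq_minus_one_le_sqrt) simp
  ultimately show "(\<integral>x. \<bar>x\<^sup>2 - 1\<bar> \<partial>M) \<le> sqrt (real \<beta> / (real \<sigma>)\<^sup>2 / real N)"
    by (rule order_trans[rotated])
qed

theorem theorem1p2:
  fixes E :: "'a \<Rightarrow> 'a \<Rightarrow> bool" and e :: 'a and k :: nat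
    and \<mu> :: "nat \<Rightarrow> real measure"
  assumes sym: "\<And>x y. E x y \<Longrightarrow> E y x"
    and irrefl: "\<And>x. \<not> E x x"
    and locfin: "\<And>x. finite {y. E x y}"
    and conn: "\<And>x y. E\<^sup>*\<^sup>* x y"
    and k: "k \<ge> 1"
    and sigma: "card {x. gdist UNIV E x e = k} \<ge> 1"
    and distr: "\<And>N. N \<ge> 1 \<Longrightarrow> real_distribution (\<mu> N)"
    and moments: "\<And>N m. N \<ge> 1 \<Longrightarrow>
        integrable (\<mu> N) (\<lambda>x. x ^ m) \<and>
        (\<integral>x. x ^ m \<partial>\<mu> N) =
          (1 / sqrt (real N * real (card {x. gdist UNIV E x e = k}))) ^ m *
          real (closed_walks (star_vertices N e)
                  (dist_kgraph (star_vertices N e) (star_adj N E e) k) (0, e) m)"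
  shows "weak_conv_m \<mu> centered_bernoulli"
proof -
  define c where "c = real (card {v. gdist UNIV E e v \<le> 2 * k} ^ 3) / (real (card {x. gdist UNIV E x e = k}))\<^sup>2"
  have bounds: "real_distribution (\<mu> N) \<and> integrable (\<mu> N) (\<lambda>x. x\<^sup>2) \<and> (\<integral>x. x \<partial>\<mu> N) = 0 \<and>
      (\<integral>x. \<bar>x\<^sup>2 - 1\<bar> \<partial>\<mu> N) \<le> sqrt (c / N)" if "1 \<le> N" for N
  proof -
    interpret star_power E e N
      using sym locfin conn that by unfold_locales
    show ?thesis
      using normalized_dist_kgraph_moments[OF k sigma distr[OF that] moments[OF that]]
        distr[OF that] moments[OF that, of 2] unfolding c_def by simp
  qed
  show ?thesis
  proof (rule weak_conv_centered_bernoulli)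
    show "\<forall>\<^sub>F N in sequentially. real_distribution (\<mu> N) \<and> integrable (\<mu> N) (\<lambda>x. x\<^sup>2) \<and> (\<integral>x. x \<partial>\<mu> N) = 0"
      using eventually_ge_at_top[of 1] by eventually_elim (use bounds in blast)
    have "\<forall>\<^sub>F N in sequentially. norm (\<integral>x. \<bar>x\<^sup>2 - 1\<bar> \<partial>\<mu> N) \<le> sqrt (c / N)"
      using eventually_ge_at_top[of 1] by eventually_elim (use bounds in \<open>auto intro: integral_nonneg_AE\<close>)
    moreover have "(\<lambda>N. sqrt (c / real N)) \<longlonglongrightarrow> 0"
      using tendsto_real_sqrt[OF lim_const_over_n[of c]] by simp
    ultimately show "(\<lambda>N. \<integral>x. \<bar>x\<^sup>2 - 1\<bar> \<partial>\<mu> N) \<longlonglongrightarrow> 0"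
      by (rule Lim_null_comparison)
  qed
qed

end
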